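(* Let $n\ge 1$, let $\gamma_1,\dots,\gamma_{n+1}\in\mathbb{C}$, and let $s_1,\dots,s_{n+1}$ be sufficiently differentiable functions of $z$. Then $$W^{\gamma_n,\gamma_{n+1}}_2\Big(W^{\gamma_1,\dots,\gamma_n}_n(s_1,\dots,s_n),\ W^{\gamma_1,\dots,\gamma_{n-1},\gamma_{n+1}}_n(s_1,\dots,s_{n-1},s_{n+1})\Big)=W^{\gamma_1,\dots,\gamma_{n-1}}_{n-1}(s_1,\dots,s_{n-1})\;W^{\gamma_1,\dots,\gamma_{n+1}}_{n+1}(s_1,\dots,s_{n+1}).$$
   Context: For constants $\gamma_i$ put $\nabla_i=\partial_z+\gamma_i$. For $k\ge1$ the twisted Wronskian of functions $f_1,\dots,f_k$ with twists $\gamma_{i_1},\dots,\gamma_{i_k}$ is the determinant $$W^{\gamma_{i_1},\dots,\gamma_{i_k}}_k(f_1,\dots,f_k)=\det_{1\le a,b\le k}\big[(\partial_z+\gamma_{i_a})^{b-1}f_a\big];$$ in particular $W^{\alpha,\beta}_2(f,g)=f\,(g'+\beta g)-g\,(f'+\alpha f)$. By convention the Wronskian of the empty family ($k=0$) equals $1$. *)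

theory Defs
  imports "HOL-Analysis.Analysis" "Jordan_Normal_Form.Determinant"
begin

definition twop :: "complex \<Rightarrow> (complex \<Rightarrow> complex) \<Rightarrow> complex \<Rightarrow> complex" where
  "twop \<gamma> f = (\<lambda>z. deriv f z + \<gamma> * f z)"

text \<open>For k = 0 this is the determinant of the empty matrix, i.e. 1.\<close>
definition twronskian :: "nat \<Rightarrow> (nat \<Rightarrow> complex) \<Rightarrow> (nat \<Rightarrow> complex \<Rightarrow> complex) \<Rightarrow> complex \<Rightarrow> complex" where
  "twronskian k g f = (\<lambda>z. Determinant.det (mat k k (\<lambda>(a, b). ((twop (g a)) ^^ b) (f a) z)))"

end

theory Submission
  imports Defs "Jordan_Normal_Form.Char_Poly" "HOL-Complex_Analysis.Cauchy_Integral_Formula"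
begin

text \<open>Let M be the (n+1) x (n+1) twisted Wronskian matrix of s_1, ..., s_{n+1}, evaluated at z.
  The two n x n Wronskians on the left are the minors of M obtained by deleting its last column
  together with its last, respectively second-to-last, row. Differentiating a twisted Wronskian
  row by row, each row contributes the determinant with that row shifted one order up minus its
  twist times the Wronskian; summed over the rows, the shifted determinants collapse to the one
  whose last column is shifted. Hence the twisted derivatives on the left are, up to the same
  multiple of the Wronskians, the minors of M that delete the second-to-last column. The left-hand
  side is therefore the 2 x 2 determinant of the complementary minors of M, and the
  Desnanot-Jacobi identity turns it into W_{n-1} W_{n+1}.\<close>

lemma det_mat_leibniz:
  "det (mat k k (\<lambda>(i,j). A i j))
     = (\<Sum>p\<in>{p. p permutes {0..<k}}. signof p * (\<Prod>i=0..<k. A i (p i)))"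
proof -
  have "p i < k" if "p permutes {0..<k}" "i < k" for p i
    using that by (simp add: permutes_in_image)
  then show ?thesis
    by (subst det_def'[of _ k]) (auto intro!: sum.cong prod.cong)
qed

lemma det_2x2:
  assumes "A \<in> carrier_mat 2 2"
  shows "det A = A $$ (0,0) * A $$ (1,1) - A $$ (0,1) * A $$ (1,0)"
proof -
  have "det A = A $$ (0,0) * cofactor A 0 0 + A $$ (1,0) * cofactor A 1 0"
    using laplace_expansion_column[OF assms, of 0] by (simp add: numeral_2_eq_2)
  moreover have "cofactor A 0 0 = A $$ (1,1)" "cofactor A 1 0 = - A $$ (0,1)"
    unfolding cofactor_def using assms by (subst det_single; auto simp: mat_delete_def)+
  ultimately show ?thesis by (simp add: algebra_simps)
qed

lemma det_mat_row_combination: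
  fixes A :: "nat \<Rightarrow> nat \<Rightarrow> 'a::comm_ring_1"
  assumes "r < k"
  shows "det (mat k k (\<lambda>(i,j). if i = r then B i j - c i * A i j else A i j))
       = det (mat k k (\<lambda>(i,j). if i = r then B i j else A i j))
         - c r * det (mat k k (\<lambda>(i,j). A i j))"
proof -
  define R where "R v = mat k k (\<lambda>(i,j). if i = r then v j else A i j)" for v
  define C where "C j = cofactor (R (A r)) r j" for j
  have "mat_delete (R v) r j = mat_delete (R (A r)) r j" for v j
    unfolding mat_delete_def R_def by (rule eq_matI) auto
  then have cofactor_R: "cofactor (R v) r j = C j" for v j
    unfolding cofactor_def C_def by metis
  have "det (R v) = (\<Sum>j<k. R v $$ (r,j) * cofactor (R v) r j)" for v
    by (rule laplace_expansion_row) (simp_all add: R_def assms)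
  moreover have "R v $$ (r,j) = v j" if "j < k" for v j
    using that assms by (simp add: R_def)
  ultimately have expand: "det (R v) = (\<Sum>j<k. v j * C j)" for v
    by (simp add: cofactor_R)
  have "mat k k (\<lambda>(i,j). if i = r then B i j - c i * A i j else A i j)
          = R (\<lambda>j. B r j - c r * A r j)"
       "mat k k (\<lambda>(i,j). if i = r then B i j else A i j) = R (B r)"
       "mat k k (\<lambda>(i,j). A i j) = R (A r)"
    unfolding R_def by (rule eq_matI; auto)+
  then show ?thesis
    by (simp add: expand algebra_simps sum_subtractf sum_distrib_left)
qed

text \<open>Both sides expand to the sum over permutations p and rows r of the product in which
  the factor of row r is taken one column further; on the right r is indexed by the
  column p r.\<close>
lemma sum_det_mat_shift_rows_eq_cols:
  fixes E :: "nat \<Rightarrow> nat \<Rightarrow> 'a::comm_ring_1"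
  shows "(\<Sum>r<k. det (mat k k (\<lambda>(i,j). if i = r then E i (Suc j) else E i j)))
       = (\<Sum>c<k. det (mat k k (\<lambda>(i,j). if j = c then E i (Suc j) else E i j)))"
proof -
  have "(\<Sum>r<k. \<Prod>i=0..<k. if i = r then E i (Suc (p i)) else E i (p i))
      = (\<Sum>c<k. \<Prod>i=0..<k. if p i = c then E i (Suc (p i)) else E i (p i))"
    if p: "p permutes {0..<k}" for p
  proof -
    have "bij_betw p {..<k} {..<k}"
      using permutes_imp_bij[OF p] by (simp add: atLeast0LessThan)
    moreover have "p i = p r \<longleftrightarrow> i = r" for i r
      using permutes_inj[OF p] by (auto dest: injD)
    ultimately show ?thesis
      by (subst sum.reindex_bij_betw[symmetric, where h = p]) simp_all
  qed
  then have "(\<Sum>p\<in>{p. p permutes {0..<k}}.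
                signof p * (\<Sum>r<k. \<Prod>i=0..<k. if i = r then E i (Suc (p i)) else E i (p i)))
           = (\<Sum>p\<in>{p. p permutes {0..<k}}.
                signof p * (\<Sum>c<k. \<Prod>i=0..<k. if p i = c then E i (Suc (p i)) else E i (p i)))"
    by (intro sum.cong) simp_all
  then show ?thesis
    by (simp add: det_mat_leibniz sum_distrib_left sum.swap[where A = "{..<k}"])
qed

lemma sum_det_mat_shift_cols:
  fixes E :: "nat \<Rightarrow> nat \<Rightarrow> 'a::comm_ring_1"
  shows "(\<Sum>c<Suc m. det (mat (Suc m) (Suc m) (\<lambda>(i,j). if j = c then E i (Suc j) else E i j)))
       = det (mat (Suc m) (Suc m) (\<lambda>(i,j). if j = m then E i (Suc j) else E i j))"
proof -
  have "det (mat (Suc m) (Suc m) (\<lambda>(i,j). if j = c then E i (Suc j) else E i j)) = 0"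
    if "c < m" for c
    by (rule det_identical_columns[of _ "Suc m" c "Suc c"]) (use that in \<open>auto intro!: eq_vecI\<close>)
  then show ?thesis by simp
qed

lemma det_adj_mat_trailing_block:
  assumes M: "M \<in> carrier_mat (k+2) (k+2)"
  shows "det (mat 2 2 (\<lambda>(i,j). adj_mat M $$ (k+i, k+j)))
       = det (mat_delete M (k+1) (k+1)) * det (mat_delete M k k)
         - det (mat_delete M (k+1) k) * det (mat_delete M k (k+1))"
proof -
  have "(-1::'a)^(k+k) = 1" "(-1::'a)^(Suc k+Suc k) = 1"
    by (rule neg_one_even_power, simp)+
  moreover have "(-1::'a)^(k+Suc k) = -1" "(-1::'a)^(Suc k+k) = -1"
    by (rule neg_one_odd_power, simp)+
  ultimately show ?thesis
    using M by (subst det_2x2) (auto simp: adj_mat_def cofactor_def)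
qed

text \<open>Jacobi's complementary minor theorem for the trailing 2 x 2 block, multiplied by det M:
  M times the identity with its last two columns replaced by those of adj M is block
  lower triangular.\<close>
lemma det_mult_det_adj_mat_trailing_block:
  fixes M :: "'a::idom mat"
  assumes M: "M \<in> carrier_mat (k+2) (k+2)"
  shows "det M * det (mat 2 2 (\<lambda>(i,j). adj_mat M $$ (k+i, k+j)))
       = det M * (det (mat k k (\<lambda>(i,j). M $$ (i,j))) * det M)"
proof -
  define X where "X = four_block_mat (1\<^sub>m k) (mat k 2 (\<lambda>(i,j). adj_mat M $$ (i,k+j)))
     (0\<^sub>m 2 k) (mat 2 2 (\<lambda>(i,j). adj_mat M $$ (k+i,k+j)))"
  define Y where "Y = four_block_mat (mat k k (\<lambda>(i,j). M $$ (i,j))) (0\<^sub>m k 2)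
     (mat 2 k (\<lambda>(i,j). M $$ (k+i,j))) (det M \<cdot>\<^sub>m 1\<^sub>m 2)"
  have adj: "adj_mat M \<in> carrier_mat (k+2) (k+2)" "M * adj_mat M = det M \<cdot>\<^sub>m 1\<^sub>m (k+2)"
    using adj_mat[OF M] by auto
  have X: "X = mat (k+2) (k+2) (\<lambda>(i,j). if j < k then of_bool (i = j) else adj_mat M $$ (i,j))"
    unfolding X_def by (rule eq_matI) (auto simp: four_block_mat_def)
  have "M * X = Y"
  proof (rule eq_matI)
    fix i j assume "i < dim_row Y" "j < dim_col Y"
    then have ij: "i < k+2" "j < k+2" unfolding Y_def by auto
    show "(M * X) $$ (i,j) = Y $$ (i,j)"
    proof (cases "j < k")
      case True
      then have "(M * X) $$ (i,j) = (\<Sum>l<k+2. M $$ (i,l) * of_bool (l = j))"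
        using M ij unfolding X by (auto simp: scalar_prod_def atLeast0LessThan intro!: sum.cong)
      then show ?thesis using True ij unfolding Y_def by (simp add: four_block_mat_def)
    next
      case False
      then have "(M * X) $$ (i,j) = (M * adj_mat M) $$ (i,j)"
        using M ij adj(1) unfolding X by (auto simp: scalar_prod_def intro!: sum.cong)
      also have "\<dots> = (if i = j then det M else 0)" using adj(2) ij by simp
      finally show ?thesis using False ij unfolding Y_def by (simp add: four_block_mat_def) arith
    qed
  qed (use M X in \<open>auto simp: Y_def\<close>)
  have "det X = det (mat 2 2 (\<lambda>(i,j). adj_mat M $$ (k+i,k+j)))"
    unfolding X_def by (subst det_four_block_mat_lower_left_zero) auto
  then have "det M * det (mat 2 2 (\<lambda>(i,j). adj_mat M $$ (k+i,k+j))) = det (M * X)"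
    by (simp add: det_mult[OF M] X)
  also have "\<dots> = det (mat k k (\<lambda>(i,j). M $$ (i,j))) * (det M * det M)"
    unfolding \<open>M * X = Y\<close> Y_def
    by (subst det_four_block_mat_upper_right_zero) (auto simp: power2_eq_square)
  finally show ?thesis by (simp add: ac_simps)
qed

text \<open>The factor det M is cancelled generically: the identity holds for the matrix
  X I + M over the polynomial ring, whose determinant is monic and hence nonzero, and
  evaluating at X = 0 gives it for M.\<close>
lemma desnanot_jacobi:
  fixes M :: "'a::idom mat"
  assumes M: "M \<in> carrier_mat (k+2) (k+2)"
  shows "det (mat_delete M (k+1) (k+1)) * det (mat_delete M k k)
          - det (mat_delete M (k+1) k) * det (mat_delete M k (k+1))
        = det (mat k k (\<lambda>(i,j). M $$ (i,j))) * det M"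
proof -
  define P where "P = char_poly_matrix (- M)"
  have P: "P \<in> carrier_mat (k+2) (k+2)" unfolding P_def using M by simp
  have "coeff (det P) (k+2) = 1"
    using degree_monic_char_poly[of "- M"] M unfolding P_def char_poly_def by simp
  then have "det P \<noteq> 0" by auto
  then have "det (mat_delete P (k+1) (k+1)) * det (mat_delete P k k)
          - det (mat_delete P (k+1) k) * det (mat_delete P k (k+1))
        = det (mat k k (\<lambda>(i,j). P $$ (i,j))) * det P"
    using det_mult_det_adj_mat_trailing_block[OF P] det_adj_mat_trailing_block[OF P] by simp
  then have "poly (det (mat_delete P (k+1) (k+1)) * det (mat_delete P k k)
          - det (mat_delete P (k+1) k) * det (mat_delete P k (k+1))) 0
        = poly (det (mat k k (\<lambda>(i,j). P $$ (i,j))) * det P) 0" by simp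
  moreover have eval: "poly (P $$ (i,j)) 0 = M $$ (i,j)" if "i < k+2" "j < k+2" for i j
    using that M unfolding P_def char_poly_matrix_def by simp
  moreover have "poly (det (mat_delete P i j)) 0 = det (mat_delete M i j)"
    if "i < k+2" "j < k+2" for i j
    by (rule poly_det_cong[of _ "k+1"]) (use M P eval in \<open>auto simp: mat_delete_def\<close>)
  moreover have "poly (det (mat k k (\<lambda>(i,j). P $$ (i,j)))) 0
                  = det (mat k k (\<lambda>(i,j). M $$ (i,j)))"
    by (rule poly_det_cong[of _ k]) (use eval in auto)
  moreover have "poly (det P) 0 = det M"
    by (rule poly_det_cong[OF M P]) (use eval in auto)
  ultimately show ?thesis by (simp only: poly_diff poly_mult)
qed

lemma has_field_derivative_det_mat:
  fixes e :: "nat \<Rightarrow> nat \<Rightarrow> 'a::real_normed_field \<Rightarrow> 'a"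
  assumes "\<And>i j. i < k \<Longrightarrow> j < k \<Longrightarrow> (e i j has_field_derivative e' i j) (at z)"
  shows "((\<lambda>z. det (mat k k (\<lambda>(i,j). e i j z))) has_field_derivative
           (\<Sum>r<k. det (mat k k (\<lambda>(i,j). if i = r then e' i j else e i j z)))) (at z)"
proof -
  define P where "P = {p. p permutes {0..<k}}"
  have perm_lt: "p i < k" if "p \<in> P" "i < k" for p i
    using that by (simp add: P_def permutes_in_image)
  have "((\<lambda>z. \<Sum>p\<in>P. signof p * (\<Prod>i=0..<k. e i (p i) z)) has_field_derivative
          (\<Sum>p\<in>P. signof p * (\<Sum>r=0..<k. e' r (p r) * (\<Prod>i\<in>{0..<k}-{r}. e i (p i) z)))) (at z)"
    by (intro DERIV_sum DERIV_cmult has_field_derivative_prod assms) (auto intro: perm_lt)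
  moreover have "(\<Prod>i=0..<k. if i = r then e' i (p i) else e i (p i) z)
      = e' r (p r) * (\<Prod>i\<in>{0..<k}-{r}. e i (p i) z)" if "r < k" for p r
    using that by (subst prod.remove[of _ r]) (auto intro!: prod.cong)
  ultimately show ?thesis
    unfolding det_mat_leibniz P_def[symmetric]
    by (simp add: sum.swap[where B = "{..<k}"] sum_distrib_left atLeast0LessThan)
qed

lemma holomorphic_on_twop_funpow:
  assumes "open S" "f holomorphic_on S"
  shows "(twop c ^^ b) f holomorphic_on S"
  by (induction b) (simp_all add: assms twop_def holomorphic_intros)

lemma has_field_derivative_twop_funpow:
  assumes "open S" "f holomorphic_on S" "z \<in> S"
  shows "((twop c ^^ b) f has_field_derivative (twop c ^^ Suc b) f z - c * (twop c ^^ b) f z) (at z)"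
  using holomorphic_derivI[OF holomorphic_on_twop_funpow[OF assms(1,2)] assms(1,3)]
  by (simp add: twop_def)

lemma has_field_derivative_twronskian:
  assumes "open S" "z \<in> S" "\<And>a. a < Suc m \<Longrightarrow> f a holomorphic_on S"
  shows "(twronskian (Suc m) g f has_field_derivative
            det (mat (Suc m) (Suc m) (\<lambda>(a,b). (twop (g a) ^^ (if b = m then Suc m else b)) (f a) z))
            - (\<Sum>a<Suc m. g a) * twronskian (Suc m) g f z) (at z)"
proof -
  define E where "E a b = (twop (g a) ^^ b) (f a) z" for a b
  have "(twronskian (Suc m) g f has_field_derivative
          (\<Sum>r<Suc m. det (mat (Suc m) (Suc m)
             (\<lambda>(a,b). if a = r then E a (Suc b) - g a * E a b else E a b)))) (at z)"
    unfolding twronskian_def E_def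
    by (intro has_field_derivative_det_mat assms(3)
          has_field_derivative_twop_funpow[OF assms(1) _ assms(2)]) simp
  also have "(\<Sum>r<Suc m. det (mat (Suc m) (Suc m)
             (\<lambda>(a,b). if a = r then E a (Suc b) - g a * E a b else E a b)))
      = (\<Sum>r<Suc m. det (mat (Suc m) (Suc m) (\<lambda>(a,b). if a = r then E a (Suc b) else E a b)))
        - (\<Sum>r<Suc m. g r) * det (mat (Suc m) (Suc m) (\<lambda>(a,b). E a b))"
    by (simp add: det_mat_row_combination sum_subtractf sum_distrib_right del: sum.lessThan_Suc)
  also have "\<dots> = det (mat (Suc m) (Suc m) (\<lambda>(a,b). if b = m then E a (Suc b) else E a b))
        - (\<Sum>r<Suc m. g r) * twronskian (Suc m) g f z"
    by (simp only: sum_det_mat_shift_rows_eq_cols sum_det_mat_shift_cols)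
       (simp add: twronskian_def E_def)
  finally show ?thesis
    by (simp add: E_def if_distrib[of "\<lambda>b. (twop _ ^^ b) _ z"] cong: if_cong)
qed

lemma twronskian_2:
  "twronskian 2 g f z = f 0 z * twop (g 1) (f 1) z - f 1 z * twop (g 0) (f 0) z"
  unfolding twronskian_def by (subst det_2x2) auto

lemma twop_twronskian:
  assumes "open S" "z \<in> S" "\<And>a. a < Suc m \<Longrightarrow> f a holomorphic_on S"
  shows "twop c (twronskian (Suc m) g f) z
       = det (mat (Suc m) (Suc m) (\<lambda>(a,b). (twop (g a) ^^ (if b = m then Suc m else b)) (f a) z))
         + (c - (\<Sum>a<Suc m. g a)) * twronskian (Suc m) g f z"
  using DERIV_imp_deriv[OF has_field_derivative_twronskian[OF assms]]
  by (simp add: twop_def algebra_simps)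

theorem mainTheorem4:
  fixes n :: nat and \<gamma> :: "nat \<Rightarrow> complex" and s :: "nat \<Rightarrow> complex \<Rightarrow> complex"
    and S :: "complex set" and z :: complex
  assumes "n \<ge> 1"
    and "open S"
    and "\<And>i. i \<in> {1..n+1} \<Longrightarrow> s i holomorphic_on S"
    and "z \<in> S"
  shows "twronskian 2 (\<lambda>a. if a = 0 then \<gamma> n else \<gamma> (n+1))
           (\<lambda>a. if a = 0 then twronskian n (\<lambda>a. \<gamma> (a+1)) (\<lambda>a. s (a+1))
                 else twronskian n (\<lambda>a. if a < n - 1 then \<gamma> (a+1) else \<gamma> (n+1))
                                   (\<lambda>a. if a < n - 1 then s (a+1) else s (n+1))) z
       = twronskian (n - 1) (\<lambda>a. \<gamma> (a+1)) (\<lambda>a. s (a+1)) z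
         * twronskian (n + 1) (\<lambda>a. \<gamma> (a+1)) (\<lambda>a. s (a+1)) z"
proof -
  obtain m where n: "n = Suc m" using assms(1) by (cases n) auto
  define A where "A = twronskian n (\<lambda>a. \<gamma> (a+1)) (\<lambda>a. s (a+1))"
  define B where "B = twronskian n (\<lambda>a. if a < n - 1 then \<gamma> (a+1) else \<gamma> (n+1))
                                   (\<lambda>a. if a < n - 1 then s (a+1) else s (n+1))"
  define M where "M = mat (m+2) (m+2) (\<lambda>(a,b). (twop (\<gamma> (a+1)) ^^ b) (s (a+1)) z)"
  define \<sigma> where "\<sigma> = (\<Sum>a<m. \<gamma> (a+1))"
  have A: "A z = det (mat_delete M (m+1) (m+1))" and B: "B z = det (mat_delete M m (m+1))"
    unfolding A_def B_def twronskian_def n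
    by (intro arg_cong[where f = det] eq_matI; auto simp: M_def mat_delete_def less_Suc_eq)+
  have twop_A: "twop (\<gamma> n) A z = det (mat_delete M (m+1) m) - \<sigma> * A z"
    unfolding A_def n using assms(3) n
    by (subst twop_twronskian[OF assms(2,4)])
       (auto simp: \<sigma>_def M_def mat_delete_def less_Suc_eq intro!: arg_cong[where f = det] eq_matI)
  have twop_B: "twop (\<gamma> (n+1)) B z = det (mat_delete M m m) - \<sigma> * B z"
    unfolding B_def n using assms(3) n
    by (subst twop_twronskian[OF assms(2,4)])
       (auto simp: \<sigma>_def M_def mat_delete_def less_Suc_eq intro!: arg_cong[where f = det] eq_matI)
  have "A z * twop (\<gamma> (n+1)) B z - B z * twop (\<gamma> n) A z
      = det (mat_delete M (m+1) (m+1)) * det (mat_delete M m m)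
        - det (mat_delete M (m+1) m) * det (mat_delete M m (m+1))"
    unfolding twop_A twop_B A B by (simp add: algebra_simps)
  also have "\<dots> = det (mat m m (\<lambda>(i,j). M $$ (i,j))) * det M"
    by (rule desnanot_jacobi) (simp add: M_def)
  also have "\<dots> = twronskian (n - 1) (\<lambda>a. \<gamma> (a+1)) (\<lambda>a. s (a+1)) z
                 * twronskian (n + 1) (\<lambda>a. \<gamma> (a+1)) (\<lambda>a. s (a+1)) z"
    unfolding twronskian_def n M_def
    by (intro arg_cong2[where f = "(*)"] arg_cong[where f = det] eq_matI) simp_all
  finally show ?thesis
    unfolding twronskian_2 A_def[symmetric] B_def[symmetric] by (simp add: mult.commute)
qed

end
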